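(* Let $S$ be a finite relational signature and let $P$ be a ProbLog model over $S$ without domain constants such that every background knowledge clause $h:-b_1,\ldots,b_l$ of $P$ has the property that every variable occurring in the body $b_1,\ldots,b_l$ also occurs in the head $h$. Then the family $\{Q^{(n)}\mid n\in\mathbb{N}\}$ of distributions defined by $P$ is a projective random relational structure model.
   Context: A relational signature $S$ is a set of relation symbols with arities, written $r/k$. For $n\in\mathbb{N}$ let $[n]=\{0,\ldots,n-1\}$ and let $\Omega^{(n)}$ be the set of possible worlds for $S$ over domain $[n]$, i.e. truth assignments to all ground atoms $r(\mathbf{i})$, $r/k\in S$, $\mathbf{i}\in[n]^k$. A random relational structure model (RRSM) is a family $\{Q^{(n)}\mid n\in\mathbb{N}\}$ with $Q^{(n)}$ a probability distribution on $\Omega^{(n)}$. $Q^{(n)}$ is exchangeable if $Q^{(n)}(\omega)=Q^{(n)}(\omega')$ whenever $\omega,\omega'$ are isomorphic. For $m\le n$, $Q^{(n)}\downarrow[m]$ is the marginal distribution of $Q^{(n)}$ on the ground atoms with all arguments in $[m]$ (a distribution on $\Omega^{(m)}$). An RRSM is projective if every $Q^{(n)}$ is exchangeable and $Q^{(n)}\downarrow[m]=Q^{(m)}$ for all $m<n$. A ProbLog model (without constants) consists of a finite set of labeled facts $p::r(T_1,\ldots,T_k)$ with $p\in[0,1]$, $r/k\in S$ and variables $T_j$, together with background knowledge: a finite set of definite clauses $h:-b_1,\ldots,b_l$ whose head $h$ and body atoms $b_j$ are atoms over $S$ with variable arguments. For domain $[n]$, each ground instance (substitution of elements of $[n]$ for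 the variables) of each labeled fact $p::a$ is independently selected as true with probability $p$; given the selected set $F$ of ground facts, the resulting world $\omega_F\in\Omega^{(n)}$ is the least model over $[n]$ of $F$ together with all ground instances over $[n]$ of the background clauses. $Q^{(n)}(\omega)$ is the probability that $\omega_F=\omega$. *)

theory Defs
  imports Complex_Main
begin

type_synonym ('r,'v) atom = "'r \<times> 'v list"
type_synonym 'r gatom = "'r \<times> nat list"

definition ground_atoms :: "'r set \<Rightarrow> ('r \<Rightarrow> nat) \<Rightarrow> nat \<Rightarrow> 'r gatom set" where
  "ground_atoms S ar n = {(r, is). r \<in> S \<and> length is = ar r \<and> set is \<subseteq> {..<n}}"

text \<open>Possible worlds over [n]: a truth assignment is identified with the set of true ground atoms.\<close>
definition worlds :: "'r set \<Rightarrow> ('r \<Rightarrow> nat) \<Rightarrow> nat \<Rightarrow> 'r gatom set set" where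
  "worlds S ar n = Pow (ground_atoms S ar n)"

definition inst :: "('v \<Rightarrow> nat) \<Rightarrow> ('r,'v) atom \<Rightarrow> 'r gatom" where
  "inst \<sigma> a = (fst a, map \<sigma> (snd a))"

definition vars_atom :: "('r,'v) atom \<Rightarrow> 'v set" where
  "vars_atom a = set (snd a)"

definition wf_atom :: "'r set \<Rightarrow> ('r \<Rightarrow> nat) \<Rightarrow> ('r,'v) atom \<Rightarrow> bool" where
  "wf_atom S ar a \<longleftrightarrow> fst a \<in> S \<and> length (snd a) = ar (fst a)"

text \<open>A ProbLog model: a finite list of labeled facts (p, a) meaning p::a, and a finite list of
  definite clauses (h, [b1,...,bl]) meaning h :- b1,...,bl.\<close>
definition problog_wf ::
  "'r set \<Rightarrow> ('r \<Rightarrow> nat) \<Rightarrow> (real \<times> ('r,'v) atom) list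
    \<Rightarrow> (('r,'v) atom \<times> ('r,'v) atom list) list \<Rightarrow> bool" where
  "problog_wf S ar facts bk \<longleftrightarrow>
     (\<forall>(p, a) \<in> set facts. 0 \<le> p \<and> p \<le> 1 \<and> wf_atom S ar a) \<and>
     (\<forall>(h, bs) \<in> set bk. wf_atom S ar h \<and> (\<forall>b \<in> set bs. wf_atom S ar b))"

definition body_vars_in_head :: "(('r,'v) atom \<times> ('r,'v) atom list) list \<Rightarrow> bool" where
  "body_vars_in_head bk \<longleftrightarrow> (\<forall>(h, bs) \<in> set bk. (\<Union>b \<in> set bs. vars_atom b) \<subseteq> vars_atom h)"

inductive_set least_model ::
  "(('r,'v) atom \<times> ('r,'v) atom list) list \<Rightarrow> nat \<Rightarrow> 'r gatom set \<Rightarrow> 'r gatom set"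
  for bk :: "(('r,'v) atom \<times> ('r,'v) atom list) list" and n :: nat and F :: "'r gatom set" where
  fact: "g \<in> F \<Longrightarrow> g \<in> least_model bk n F"
| rule: "(h, bs) \<in> set bk \<Longrightarrow>
         (\<forall>v \<in> vars_atom h \<union> (\<Union>b \<in> set bs. vars_atom b). \<sigma> v < n) \<Longrightarrow>
         (\<forall>b \<in> set bs. inst \<sigma> b \<in> least_model bk n F) \<Longrightarrow>
         inst \<sigma> h \<in> least_model bk n F"

text \<open>The independent random choices: pairs (k, g) with g a ground instance over [n] of the
  k-th labeled fact.\<close>
definition choices :: "(real \<times> ('r,'v) atom) list \<Rightarrow> nat \<Rightarrow> (nat \<times> 'r gatom) set" where
  "choices facts n = {(k, g). k < length facts \<and>
     (\<exists>\<sigma>. (\<forall>v \<in> vars_atom (snd (facts ! k)). \<sigma> v < n) \<and> g = inst \<sigma> (snd (facts ! k)))}"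

definition sel_prob :: "(real \<times> ('r,'v) atom) list \<Rightarrow> nat \<Rightarrow> (nat \<times> 'r gatom) set \<Rightarrow> real" where
  "sel_prob facts n F =
     (\<Prod>(k, g) \<in> choices facts n. if (k, g) \<in> F then fst (facts ! k) else 1 - fst (facts ! k))"

definition problog_dist ::
  "(real \<times> ('r,'v) atom) list \<Rightarrow> (('r,'v) atom \<times> ('r,'v) atom list) list
    \<Rightarrow> nat \<Rightarrow> 'r gatom set \<Rightarrow> real" where
  "problog_dist facts bk n \<omega> =
     (\<Sum>F \<in> Pow (choices facts n).
        if least_model bk n (snd ` F) = \<omega> then sel_prob facts n F else 0)"

definition rename_world :: "(nat \<Rightarrow> nat) \<Rightarrow> 'r gatom set \<Rightarrow> 'r gatom set" where
  "rename_world \<pi> \<omega> = (\<lambda>(r, is). (r, map \<pi> is)) ` \<omega>"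

definition isomorphic_worlds :: "nat \<Rightarrow> 'r gatom set \<Rightarrow> 'r gatom set \<Rightarrow> bool" where
  "isomorphic_worlds n \<omega> \<omega>' \<longleftrightarrow>
     (\<exists>\<pi>. bij_betw \<pi> {..<n} {..<n} \<and> \<omega>' = rename_world \<pi> \<omega>)"

definition is_distribution :: "'r set \<Rightarrow> ('r \<Rightarrow> nat) \<Rightarrow> nat \<Rightarrow> ('r gatom set \<Rightarrow> real) \<Rightarrow> bool" where
  "is_distribution S ar n Q \<longleftrightarrow>
     (\<forall>\<omega> \<in> worlds S ar n. 0 \<le> Q \<omega>) \<and> (\<Sum>\<omega> \<in> worlds S ar n. Q \<omega>) = 1"

definition exchangeable :: "'r set \<Rightarrow> ('r \<Rightarrow> nat) \<Rightarrow> nat \<Rightarrow> ('r gatom set \<Rightarrow> real) \<Rightarrow> bool" where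
  "exchangeable S ar n Q \<longleftrightarrow>
     (\<forall>\<omega> \<in> worlds S ar n. \<forall>\<omega>' \<in> worlds S ar n. isomorphic_worlds n \<omega> \<omega>' \<longrightarrow> Q \<omega> = Q \<omega>')"

definition marginal ::
  "'r set \<Rightarrow> ('r \<Rightarrow> nat) \<Rightarrow> nat \<Rightarrow> nat \<Rightarrow> ('r gatom set \<Rightarrow> real) \<Rightarrow> 'r gatom set \<Rightarrow> real" where
  "marginal S ar n m Q \<omega>' =
     (\<Sum>\<omega> \<in> {\<omega> \<in> worlds S ar n. \<omega> \<inter> ground_atoms S ar m = \<omega>'}. Q \<omega>)"

definition projective_rrsm :: "'r set \<Rightarrow> ('r \<Rightarrow> nat) \<Rightarrow> (nat \<Rightarrow> 'r gatom set \<Rightarrow> real) \<Rightarrow> bool" where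
  "projective_rrsm S ar Q \<longleftrightarrow>
     (\<forall>n. is_distribution S ar n (Q n) \<and> exchangeable S ar n (Q n)) \<and>
     (\<forall>m n. m < n \<longrightarrow> (\<forall>\<omega> \<in> worlds S ar m. marginal S ar n m (Q n) \<omega> = Q m \<omega>))"

end

theory Submission
  imports Defs
begin

text \<open>Q^(n) is the image, under the least-model map, of independent Bernoulli selections of the
  ground instances of the labelled facts. A permutation of [n] permutes these instances without
  changing their probabilities and commutes with the least-model operator, which gives
  exchangeability. For projectivity, the condition on the clauses makes every derivation of an
  atom over [m] use only clause instances and selected facts over [m]; so the restriction to [m]
  of the least model over [n] is the least model over [m] of the selections among the instances
  over [m], and summing out the independent selections of all other instances leaves Q^(m).\<close>

section \<open>Independent selections\<close>

definition selection_weight :: "('c \<Rightarrow> real) \<Rightarrow> 'c set \<Rightarrow> 'c set \<Rightarrow> real" where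
  "selection_weight q C F = (\<Prod>c\<in>C. if c \<in> F then q c else 1 - q c)"

lemma selection_weight_eq_prod:
  assumes "finite C" "F \<subseteq> C"
  shows "selection_weight q C F = (\<Prod>c\<in>F. q c) * (\<Prod>c\<in>C - F. 1 - q c)"
proof -
  have "C \<inter> {c. c \<in> F} = F" "C \<inter> - {c. c \<in> F} = C - F" using assms(2) by auto
  then show ?thesis unfolding selection_weight_def prod.If_cases[OF assms(1)] by simp
qed

lemma selection_weight_nonneg:
  assumes "\<And>c. c \<in> C \<Longrightarrow> 0 \<le> q c \<and> q c \<le> 1"
  shows "0 \<le> selection_weight q C F"
  unfolding selection_weight_def using assms by (intro prod_nonneg) auto

lemma sum_selection_weight:
  assumes "finite C"
  shows "(\<Sum>F\<in>Pow C. selection_weight q C F) = 1"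
proof -
  have "(\<Sum>F\<in>Pow C. selection_weight q C F) = (\<Prod>c\<in>C. q c + (1 - q c))"
    unfolding prod_add[OF assms] using assms
    by (intro sum.cong) (auto simp: selection_weight_eq_prod)
  then show ?thesis by simp
qed

lemma selection_weight_Un:
  assumes "finite A" "finite B" "A \<inter> B = {}" "X \<subseteq> A" "Y \<subseteq> B"
  shows "selection_weight q (A \<union> B) (X \<union> Y) = selection_weight q A X * selection_weight q B Y"
proof -
  have fin: "finite X" "finite Y" "finite (A - X)" "finite (B - Y)"
    using assms finite_subset by auto
  have "(A \<union> B) - (X \<union> Y) = (A - X) \<union> (B - Y)" using assms by auto
  then have "selection_weight q (A \<union> B) (X \<union> Y)
      = (\<Prod>c\<in>X \<union> Y. q c) * (\<Prod>c\<in>(A - X) \<union> (B - Y). 1 - q c)"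
    using assms by (subst selection_weight_eq_prod) auto
  also have "\<dots> = ((\<Prod>c\<in>X. q c) * (\<Prod>c\<in>Y. q c))
      * ((\<Prod>c\<in>A - X. 1 - q c) * (\<Prod>c\<in>B - Y. 1 - q c))"
  proof -
    have "X \<inter> Y = {}" "(A - X) \<inter> (B - Y) = {}" using assms by auto
    then show ?thesis using fin by (simp add: prod.union_disjoint)
  qed
  finally show ?thesis using assms by (simp add: selection_weight_eq_prod mult_ac)
qed

lemma sum_Pow_Un:
  assumes "A \<inter> B = {}"
  shows "(\<Sum>F\<in>Pow (A \<union> B). g F) = (\<Sum>X\<in>Pow A. \<Sum>Y\<in>Pow B. g (X \<union> Y))"
proof -
  have "bij_betw (\<lambda>(X, Y). X \<union> Y) (Pow A \<times> Pow B) (Pow (A \<union> B))"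
    by (rule bij_betw_byWitness[where f' = "\<lambda>F. (F \<inter> A, F \<inter> B)"]) (use assms in auto)
  from sum.reindex_bij_betw[OF this, of g] show ?thesis
    by (simp add: sum.cartesian_product case_prod_unfold)
qed

lemma sum_selection_weight_restrict:
  assumes "finite C" "C' \<subseteq> C"
  shows "(\<Sum>F\<in>Pow C. h (F \<inter> C') * selection_weight q C F) = (\<Sum>F\<in>Pow C'. h F * selection_weight q C' F)"
proof -
  define D where "D = C - C'"
  have C: "C = C' \<union> D" "C' \<inter> D = {}" "finite C'" "finite D"
    using assms finite_subset unfolding D_def by auto
  have "(\<Sum>F\<in>Pow C. h (F \<inter> C') * selection_weight q C F)
      = (\<Sum>X\<in>Pow C'. \<Sum>Y\<in>Pow D. h X * selection_weight q C' X * selection_weight q D Y)"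
    unfolding C(1) sum_Pow_Un[OF C(2)]
  proof (intro sum.cong refl)
    fix X Y assume "X \<in> Pow C'" "Y \<in> Pow D"
    moreover from this have "(X \<union> Y) \<inter> C' = X" using C(2) by auto
    ultimately show "h ((X \<union> Y) \<inter> C') * selection_weight q (C' \<union> D) (X \<union> Y)
        = h X * selection_weight q C' X * selection_weight q D Y"
      using C by (simp add: selection_weight_Un)
  qed
  also have "\<dots> = (\<Sum>X\<in>Pow C'. h X * selection_weight q C' X)"
    by (simp add: sum_distrib_left[symmetric] sum_selection_weight[OF C(4)])
  finally show ?thesis .
qed

lemma selection_weight_image:
  assumes f: "bij_betw f C C" and q: "\<And>c. c \<in> C \<Longrightarrow> q (f c) = q c" and F: "F \<subseteq> C"
  shows "selection_weight q C (f ` F) = selection_weight q C F"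
proof -
  have "selection_weight q C (f ` F) = (\<Prod>c\<in>C. if f c \<in> f ` F then q (f c) else 1 - q (f c))"
    unfolding selection_weight_def by (rule prod.reindex_bij_betw[OF f, symmetric])
  also have "\<dots> = selection_weight q C F"
    unfolding selection_weight_def using F q inj_on_image_mem_iff[OF bij_betw_imp_inj_on[OF f]]
    by (intro prod.cong) auto
  finally show ?thesis .
qed

section \<open>Atoms over [n] and least models\<close>

definition atoms_over :: "nat \<Rightarrow> 'r gatom set" where
  "atoms_over n = {g. set (snd g) \<subseteq> {..<n}}"

lemma inst_in_atoms_over_iff: "inst \<sigma> a \<in> atoms_over n \<longleftrightarrow> (\<forall>v\<in>vars_atom a. \<sigma> v < n)"
  by (auto simp: inst_def atoms_over_def vars_atom_def)

lemma atoms_over_mono: "m \<le> n \<Longrightarrow> atoms_over m \<subseteq> atoms_over n"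
  by (auto simp: atoms_over_def)

lemma ground_atoms_subset_atoms_over: "ground_atoms S ar n \<subseteq> atoms_over n"
  by (auto simp: ground_atoms_def atoms_over_def)

lemma ground_atoms_eq_Int_atoms_over:
  "m \<le> n \<Longrightarrow> ground_atoms S ar m = ground_atoms S ar n \<inter> atoms_over m"
  by (auto simp: ground_atoms_def atoms_over_def)

lemma finite_ground_atoms:
  assumes "finite S"
  shows "finite (ground_atoms S ar n)"
proof -
  have "ground_atoms S ar n = (\<Union>r\<in>S. Pair r ` {is. set is \<subseteq> {..<n} \<and> length is = ar r})"
    by (auto simp: ground_atoms_def)
  then show ?thesis using assms by (simp add: finite_lists_length_eq)
qed

lemma finite_worlds: "finite S \<Longrightarrow> finite (worlds S ar n)"
  unfolding worlds_def by (simp add: finite_ground_atoms)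

lemma least_model_subset_atoms_over:
  assumes "G \<subseteq> atoms_over n"
  shows "least_model bk n G \<subseteq> atoms_over n"
proof
  fix g assume "g \<in> least_model bk n G"
  then show "g \<in> atoms_over n"
    by induction (use assms in \<open>auto simp: inst_in_atoms_over_iff\<close>)
qed

lemma least_model_subset_ground_atoms:
  assumes "\<forall>(h, bs) \<in> set bk. wf_atom S ar h" and "G \<subseteq> ground_atoms S ar n"
  shows "least_model bk n G \<subseteq> ground_atoms S ar n"
proof
  fix g assume "g \<in> least_model bk n G"
  then show "g \<in> ground_atoms S ar n"
  proof induction
    case (rule h bs \<sigma>)
    then have "wf_atom S ar h" "inst \<sigma> h \<in> atoms_over n"
      using assms(1) by (auto simp: inst_in_atoms_over_iff)
    then show ?case by (auto simp: ground_atoms_def wf_atom_def inst_def atoms_over_def)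
  qed (use assms(2) in blast)
qed

lemma least_model_mono:
  assumes "m \<le> n" "G \<subseteq> G'"
  shows "least_model bk m G \<subseteq> least_model bk n G'"
proof
  fix g assume "g \<in> least_model bk m G"
  then show "g \<in> least_model bk n G'"
  proof induction
    case (rule h bs \<sigma>)
    have "\<forall>v \<in> vars_atom h \<union> (\<Union>b \<in> set bs. vars_atom b). \<sigma> v < n"
    proof
      fix v assume "v \<in> vars_atom h \<union> (\<Union>b \<in> set bs. vars_atom b)"
      then have "\<sigma> v < m" using rule.hyps(2) by blast
      then show "\<sigma> v < n" using assms(1) by simp
    qed
    moreover have "\<forall>b \<in> set bs. inst \<sigma> b \<in> least_model bk n G'" using rule.IH by blast
    ultimately show ?case by (rule least_model.rule[OF rule.hyps(1)])
  qed (use assms(2) in \<open>blast intro: least_model.fact\<close>)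
qed

text \<open>This is where the hypothesis on the clauses enters: a derivation of an atom over [m]
  only instantiates clauses with elements of [m], because every body variable is a head variable.\<close>
lemma least_model_Int_atoms_over_subset:
  assumes "body_vars_in_head bk"
  shows "least_model bk n G \<inter> atoms_over m \<subseteq> least_model bk m (G \<inter> atoms_over m)"
proof -
  have "g \<in> atoms_over m \<longrightarrow> g \<in> least_model bk m (G \<inter> atoms_over m)"
    if "g \<in> least_model bk n G" for g
    using that
  proof induction
    case (rule h bs \<sigma>)
    show ?case
    proof
      assume "inst \<sigma> h \<in> atoms_over m"
      moreover have "(\<Union>b \<in> set bs. vars_atom b) \<subseteq> vars_atom h"
        using assms rule.hyps(1) unfolding body_vars_in_head_def by blast
      ultimately have bounded: "\<forall>v \<in> vars_atom h \<union> (\<Union>b \<in> set bs. vars_atom b). \<sigma> v < m"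
        by (auto simp: inst_in_atoms_over_iff)
      then have "\<forall>b \<in> set bs. inst \<sigma> b \<in> atoms_over m"
        unfolding inst_in_atoms_over_iff by blast
      then have "\<forall>b \<in> set bs. inst \<sigma> b \<in> least_model bk m (G \<inter> atoms_over m)"
        using rule.IH by blast
      then show "inst \<sigma> h \<in> least_model bk m (G \<inter> atoms_over m)"
        by (rule least_model.rule[OF rule.hyps(1) bounded])
    qed
  qed (blast intro: least_model.fact)
  then show ?thesis by blast
qed

lemma least_model_Int_atoms_over:
  assumes "body_vars_in_head bk" "m \<le> n"
  shows "least_model bk n G \<inter> atoms_over m = least_model bk m (G \<inter> atoms_over m)"
  using least_model_Int_atoms_over_subset[OF assms(1)]
    least_model_mono[OF assms(2), of "G \<inter> atoms_over m" G bk]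
    least_model_subset_atoms_over[of "G \<inter> atoms_over m" m bk]
  by blast

section \<open>Permuting the domain\<close>

definition rename_atom :: "(nat \<Rightarrow> nat) \<Rightarrow> 'r gatom \<Rightarrow> 'r gatom" where
  "rename_atom \<pi> g = (fst g, map \<pi> (snd g))"

lemma rename_world_eq_image: "rename_world \<pi> \<omega> = rename_atom \<pi> ` \<omega>"
  by (auto simp: rename_world_def rename_atom_def case_prod_unfold)

lemma rename_atom_inst: "rename_atom \<pi> (inst \<sigma> a) = inst (\<pi> \<circ> \<sigma>) a"
  by (simp add: rename_atom_def inst_def)

lemma rename_atom_in_atoms_over:
  "g \<in> atoms_over n \<Longrightarrow> \<forall>x<n. \<pi> x < n \<Longrightarrow> rename_atom \<pi> g \<in> atoms_over n"
  by (auto simp: rename_atom_def atoms_over_def)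

lemma rename_atom_inverse:
  assumes "g \<in> atoms_over n" "\<forall>x<n. \<pi>' (\<pi> x) = x"
  shows "rename_atom \<pi>' (rename_atom \<pi> g) = g"
  using assms by (auto simp: rename_atom_def atoms_over_def prod_eq_iff intro!: map_idI)

lemma image_rename_atom_inverse:
  assumes "A \<subseteq> atoms_over n" "\<forall>x<n. \<pi>' (\<pi> x) = x"
  shows "rename_atom \<pi>' ` rename_atom \<pi> ` A = A"
proof -
  have "rename_atom \<pi>' (rename_atom \<pi> g) = g" if "g \<in> A" for g
    using that assms by (blast intro: rename_atom_inverse)
  then show ?thesis by (simp add: image_image)
qed

lemma lessThan_permutation_inverse:
  assumes "bij_betw \<pi> {..<n} {..<n}"
  obtains \<pi>' where "\<forall>x<n. \<pi> x < n" "\<forall>x<n. \<pi>' x < n" "\<forall>x<n. \<pi>' (\<pi> x) = x" "\<forall>x<n. \<pi> (\<pi>' x) = x"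
proof -
  let ?\<pi>' = "inv_into {..<n} \<pi>"
  have "\<forall>x<n. \<pi> x < n" "\<forall>x<n. ?\<pi>' x < n"
    using bij_betwE[OF assms] bij_betwE[OF bij_betw_inv_into[OF assms]] by auto
  moreover have "\<forall>x<n. ?\<pi>' (\<pi> x) = x" "\<forall>x<n. \<pi> (?\<pi>' x) = x"
    using bij_betw_inv_into_left[OF assms] bij_betw_inv_into_right[OF assms] by auto
  ultimately show thesis by (rule that)
qed

lemma rename_atom_least_model_subset:
  assumes "\<forall>x<n. \<pi> x < n"
  shows "rename_atom \<pi> ` least_model bk n G \<subseteq> least_model bk n (rename_atom \<pi> ` G)"
proof -
  have "rename_atom \<pi> g \<in> least_model bk n (rename_atom \<pi> ` G)" if "g \<in> least_model bk n G" for g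
    using that
  proof induction
    case (rule h bs \<sigma>)
    then have "inst (\<pi> \<circ> \<sigma>) h \<in> least_model bk n (rename_atom \<pi> ` G)"
      using assms by (intro least_model.rule) (auto simp: rename_atom_inst)
    then show ?case by (simp add: rename_atom_inst)
  qed (blast intro: least_model.fact)
  then show ?thesis by blast
qed

lemma least_model_rename:
  assumes \<pi>: "bij_betw \<pi> {..<n} {..<n}" and G: "G \<subseteq> atoms_over n"
  shows "least_model bk n (rename_atom \<pi> ` G) = rename_atom \<pi> ` least_model bk n G"
proof
  obtain \<pi>' where maps: "\<forall>x<n. \<pi> x < n" "\<forall>x<n. \<pi>' x < n"
    and inverse: "\<forall>x<n. \<pi>' (\<pi> x) = x" "\<forall>x<n. \<pi> (\<pi>' x) = x"
    using lessThan_permutation_inverse[OF \<pi>] .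
  have G': "rename_atom \<pi> ` G \<subseteq> atoms_over n"
    using G maps(1) rename_atom_in_atoms_over by blast
  have "rename_atom \<pi>' ` rename_atom \<pi> ` G = G"
    using G inverse(1) by (rule image_rename_atom_inverse)
  then have "rename_atom \<pi>' ` least_model bk n (rename_atom \<pi> ` G) \<subseteq> least_model bk n G"
    using rename_atom_least_model_subset[OF maps(2), of bk "rename_atom \<pi> ` G"] by simp
  then have "rename_atom \<pi> ` rename_atom \<pi>' ` least_model bk n (rename_atom \<pi> ` G)
      \<subseteq> rename_atom \<pi> ` least_model bk n G"
    by (rule image_mono)
  moreover have "rename_atom \<pi> ` rename_atom \<pi>' ` least_model bk n (rename_atom \<pi> ` G)
      = least_model bk n (rename_atom \<pi> ` G)"
    using least_model_subset_atoms_over[OF G'] inverse(2) by (rule image_rename_atom_inverse)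
  ultimately show "least_model bk n (rename_atom \<pi> ` G) \<subseteq> rename_atom \<pi> ` least_model bk n G"
    by simp
  show "rename_atom \<pi> ` least_model bk n G \<subseteq> least_model bk n (rename_atom \<pi> ` G)"
    using maps(1) by (rule rename_atom_least_model_subset)
qed

section \<open>The distribution defined by a ProbLog model\<close>

definition choice_prob :: "(real \<times> ('r,'v) atom) list \<Rightarrow> nat \<times> 'r gatom \<Rightarrow> real" where
  "choice_prob facts c = fst (facts ! fst c)"

lemma sel_prob_eq_selection_weight:
  "sel_prob facts n F = selection_weight (choice_prob facts) (choices facts n) F"
  unfolding sel_prob_def selection_weight_def choice_prob_def by (rule prod.cong) auto

lemma problog_dist_eq_sum_selection_weight:
  "problog_dist facts bk n \<omega> = (\<Sum>F\<in>Pow (choices facts n).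
     if least_model bk n (snd ` F) = \<omega> then selection_weight (choice_prob facts) (choices facts n) F else 0)"
  unfolding problog_dist_def sel_prob_eq_selection_weight ..

lemma choice_prob_bounds:
  assumes "problog_wf S ar facts bk" "c \<in> choices facts n"
  shows "0 \<le> choice_prob facts c \<and> choice_prob facts c \<le> 1"
proof -
  have "facts ! fst c \<in> set facts" using assms(2) by (auto simp: choices_def)
  then show ?thesis using assms(1) by (auto simp: problog_wf_def choice_prob_def)
qed

lemma choices_eq:
  "choices facts n = {(k, inst \<sigma> (snd (facts ! k))) | k \<sigma>.
     k < length facts \<and> inst \<sigma> (snd (facts ! k)) \<in> atoms_over n}"
  unfolding choices_def inst_in_atoms_over_iff by blast

lemma choices_subset:
  assumes "problog_wf S ar facts bk"
  shows "choices facts n \<subseteq> {..<length facts} \<times> ground_atoms S ar n"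
proof
  fix c assume "c \<in> choices facts n"
  then obtain k \<sigma> where c: "c = (k, inst \<sigma> (snd (facts ! k)))" "k < length facts"
     and "inst \<sigma> (snd (facts ! k)) \<in> atoms_over n"
    unfolding choices_eq by blast
  moreover have "wf_atom S ar (snd (facts ! k))"
    using assms nth_mem[OF c(2)] unfolding problog_wf_def by fastforce
  ultimately show "c \<in> {..<length facts} \<times> ground_atoms S ar n"
    using c by (auto simp: ground_atoms_def wf_atom_def inst_def atoms_over_def)
qed

lemma finite_choices:
  assumes "finite S" "problog_wf S ar facts bk"
  shows "finite (choices facts n)"
  by (rule finite_subset[OF choices_subset[OF assms(2)]]) (simp add: finite_ground_atoms assms(1))

lemma snd_choices_subset_atoms_over: "snd ` choices facts n \<subseteq> atoms_over n"
  unfolding choices_eq by auto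

lemma choices_restrict:
  assumes "m \<le> n"
  shows "choices facts m = {c \<in> choices facts n. snd c \<in> atoms_over m}"
  using atoms_over_mono[OF assms] unfolding choices_eq by auto

lemma least_model_choices_in_worlds:
  assumes "problog_wf S ar facts bk" "F \<subseteq> choices facts n"
  shows "least_model bk n (snd ` F) \<in> worlds S ar n"
proof -
  have heads: "\<forall>(h, bs) \<in> set bk. wf_atom S ar h" using assms(1) by (auto simp: problog_wf_def)
  have "F \<subseteq> {..<length facts} \<times> ground_atoms S ar n"
    using choices_subset[OF assms(1)] assms(2) by blast
  then have "snd ` F \<subseteq> ground_atoms S ar n" by auto
  with heads show ?thesis unfolding worlds_def by (simp add: least_model_subset_ground_atoms)
qed

lemma least_model_choices_restrict:
  assumes "problog_wf S ar facts bk" "body_vars_in_head bk" "m \<le> n" "F \<subseteq> choices facts n"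
  shows "least_model bk n (snd ` F) \<inter> ground_atoms S ar m = least_model bk m (snd ` (F \<inter> choices facts m))"
proof -
  have "least_model bk n (snd ` F) \<subseteq> ground_atoms S ar n"
    using least_model_choices_in_worlds[OF assms(1,4)] by (simp add: worlds_def)
  then have "least_model bk n (snd ` F) \<inter> ground_atoms S ar m = least_model bk n (snd ` F) \<inter> atoms_over m"
    using ground_atoms_eq_Int_atoms_over[OF assms(3)] ground_atoms_subset_atoms_over by blast
  also have "\<dots> = least_model bk m (snd ` F \<inter> atoms_over m)"
    using assms(2,3) by (rule least_model_Int_atoms_over)
  also have "snd ` F \<inter> atoms_over m = snd ` (F \<inter> choices facts m)"
    unfolding choices_restrict[OF assms(3)] using assms(4) by (auto intro: rev_image_eqI)
  finally show ?thesis .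
qed

lemma bij_betw_rename_choices:
  assumes "bij_betw \<pi> {..<n} {..<n}"
  shows "bij_betw (apsnd (rename_atom \<pi>)) (choices facts n) (choices facts n)"
proof -
  obtain \<pi>' where maps: "\<forall>x<n. \<pi> x < n" "\<forall>x<n. \<pi>' x < n"
    and inverse: "\<forall>x<n. \<pi>' (\<pi> x) = x" "\<forall>x<n. \<pi> (\<pi>' x) = x"
    using lessThan_permutation_inverse[OF assms] .
  have maps_choices: "apsnd (rename_atom f) c \<in> choices facts n"
    if f: "\<forall>x<n. f x < n" and c: "c \<in> choices facts n" for f c
  proof -
    obtain k \<sigma> where c_eq: "c = (k, inst \<sigma> (snd (facts ! k)))" "k < length facts"
      and "inst \<sigma> (snd (facts ! k)) \<in> atoms_over n"
      using c unfolding choices_eq by blast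
    then have "inst (f \<circ> \<sigma>) (snd (facts ! k)) \<in> atoms_over n"
      using f rename_atom_in_atoms_over by (fastforce simp: rename_atom_inst[symmetric])
    then show ?thesis using c_eq unfolding choices_eq by (auto simp: rename_atom_inst)
  qed
  show ?thesis
  proof (rule bij_betw_byWitness[where f' = "apsnd (rename_atom \<pi>')"])
    show "\<forall>c\<in>choices facts n. apsnd (rename_atom \<pi>') (apsnd (rename_atom \<pi>) c) = c"
      "\<forall>c\<in>choices facts n. apsnd (rename_atom \<pi>) (apsnd (rename_atom \<pi>') c) = c"
      using snd_choices_subset_atoms_over[of facts n] inverse
      by (auto simp: apsnd_def map_prod_def intro!: rename_atom_inverse)
    show "apsnd (rename_atom \<pi>) ` choices facts n \<subseteq> choices facts n"
      "apsnd (rename_atom \<pi>') ` choices facts n \<subseteq> choices facts n"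
      using maps maps_choices by auto
  qed
qed

lemma problog_dist_is_distribution:
  assumes "finite S" "problog_wf S ar facts bk"
  shows "is_distribution S ar n (problog_dist facts bk n)"
proof -
  let ?C = "choices facts n" and ?w = "selection_weight (choice_prob facts) (choices facts n)"
  have nonneg: "0 \<le> ?w F" for F
    using choice_prob_bounds[OF assms(2)] by (intro selection_weight_nonneg) blast
  have "(\<Sum>\<omega>\<in>worlds S ar n. problog_dist facts bk n \<omega>)
      = (\<Sum>F\<in>Pow ?C. \<Sum>\<omega>\<in>worlds S ar n. if least_model bk n (snd ` F) = \<omega> then ?w F else 0)"
    unfolding problog_dist_eq_sum_selection_weight by (rule sum.swap)
  also have "\<dots> = (\<Sum>F\<in>Pow ?C. ?w F)"
    using least_model_choices_in_worlds[OF assms(2)] finite_worlds[OF assms(1)]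
    by (intro sum.cong) auto
  also have "\<dots> = 1"
    using finite_choices[OF assms] by (rule sum_selection_weight)
  finally show ?thesis
    unfolding is_distribution_def problog_dist_eq_sum_selection_weight
    using nonneg by (auto intro: sum_nonneg)
qed

lemma problog_dist_rename_world:
  assumes \<pi>: "bij_betw \<pi> {..<n} {..<n}" and \<omega>: "\<omega> \<subseteq> atoms_over n"
  shows "problog_dist facts bk n (rename_world \<pi> \<omega>) = problog_dist facts bk n \<omega>"
proof -
  let ?C = "choices facts n" and ?w = "selection_weight (choice_prob facts) (choices facts n)"
  let ?f = "apsnd (rename_atom \<pi>)"
  have f: "bij_betw ?f ?C ?C" using \<pi> by (rule bij_betw_rename_choices)
  have inj: "inj_on (rename_atom \<pi>) (atoms_over n)"
    using lessThan_permutation_inverse[OF \<pi>] rename_atom_inverse by (metis inj_on_inverseI)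
  have "(if least_model bk n (snd ` (?f ` F)) = rename_atom \<pi> ` \<omega> then ?w (?f ` F) else 0)
      = (if least_model bk n (snd ` F) = \<omega> then ?w F else 0)" if F: "F \<subseteq> ?C" for F
  proof -
    have snd_F: "snd ` F \<subseteq> atoms_over n" using F snd_choices_subset_atoms_over by blast
    have "least_model bk n (snd ` (?f ` F)) = rename_atom \<pi> ` least_model bk n (snd ` F)"
      using least_model_rename[OF \<pi> snd_F] by (simp add: image_image)
    then have "least_model bk n (snd ` (?f ` F)) = rename_atom \<pi> ` \<omega> \<longleftrightarrow> least_model bk n (snd ` F) = \<omega>"
      using inj_on_image_eq_iff[OF inj least_model_subset_atoms_over[OF snd_F] \<omega>] by simp
    moreover have "?w (?f ` F) = ?w F"
      using f F by (intro selection_weight_image) (auto simp: choice_prob_def)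
    ultimately show ?thesis by simp
  qed
  then have "(\<Sum>F\<in>Pow ?C. if least_model bk n (snd ` (?f ` F)) = rename_atom \<pi> ` \<omega> then ?w (?f ` F) else 0)
      = problog_dist facts bk n \<omega>"
    unfolding problog_dist_eq_sum_selection_weight by (intro sum.cong) auto
  moreover have "(\<Sum>F\<in>Pow ?C. if least_model bk n (snd ` (?f ` F)) = rename_atom \<pi> ` \<omega> then ?w (?f ` F) else 0)
      = problog_dist facts bk n (rename_world \<pi> \<omega>)"
    unfolding problog_dist_eq_sum_selection_weight rename_world_eq_image
    by (rule sum.reindex_bij_betw[OF bij_betw_image_Pow[OF f]])
  ultimately show ?thesis by simp
qed

lemma problog_dist_marginal:
  assumes "finite S" "problog_wf S ar facts bk" "body_vars_in_head bk" "m \<le> n"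
  shows "marginal S ar n m (problog_dist facts bk n) \<omega>' = problog_dist facts bk m \<omega>'"
proof -
  let ?C = "choices facts n" and ?Cm = "choices facts m"
  let ?w = "selection_weight (choice_prob facts)"
  let ?W = "{\<omega> \<in> worlds S ar n. \<omega> \<inter> ground_atoms S ar m = \<omega>'}"
  let ?ind = "\<lambda>G. if least_model bk m (snd ` G) = \<omega>' then 1 else 0 :: real"
  have "marginal S ar n m (problog_dist facts bk n) \<omega>'
      = (\<Sum>F\<in>Pow ?C. \<Sum>\<omega>\<in>?W. if least_model bk n (snd ` F) = \<omega> then ?w ?C F else 0)"
    unfolding marginal_def problog_dist_eq_sum_selection_weight by (rule sum.swap)
  also have "\<dots> = (\<Sum>F\<in>Pow ?C. ?ind (F \<inter> ?Cm) * ?w ?C F)"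
  proof (rule sum.cong)
    fix F assume "F \<in> Pow ?C"
    then show "(\<Sum>\<omega>\<in>?W. if least_model bk n (snd ` F) = \<omega> then ?w ?C F else 0) = ?ind (F \<inter> ?Cm) * ?w ?C F"
      using finite_worlds[OF assms(1)] least_model_choices_in_worlds[OF assms(2)]
        least_model_choices_restrict[OF assms(2-4)]
      by (simp add: sum.delta)
  qed simp
  also have "\<dots> = (\<Sum>F\<in>Pow ?Cm. ?ind F * ?w ?Cm F)"
    using finite_choices[OF assms(1,2)] choices_restrict[OF assms(4)]
    by (intro sum_selection_weight_restrict) auto
  also have "\<dots> = problog_dist facts bk m \<omega>'"
    unfolding problog_dist_eq_sum_selection_weight by (intro sum.cong) auto
  finally show ?thesis .
qed

theorem mainTheorem3:
  fixes S :: "'r set" and ar :: "'r \<Rightarrow> nat"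
    and facts :: "(real \<times> ('r,'v) atom) list"
    and bk :: "(('r,'v) atom \<times> ('r,'v) atom list) list"
  assumes "finite S"
    and "problog_wf S ar facts bk"
    and "body_vars_in_head bk"
  shows "projective_rrsm S ar (problog_dist facts bk)"
proof -
  have "exchangeable S ar n (problog_dist facts bk n)" for n
    unfolding exchangeable_def isomorphic_worlds_def worlds_def
    using ground_atoms_subset_atoms_over problog_dist_rename_world by (metis PowD subset_trans)
  then show ?thesis
    unfolding projective_rrsm_def
    using problog_dist_is_distribution[OF assms(1,2)] problog_dist_marginal[OF assms] by simp
qed

end
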